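(* Let $\sigma : X^* \to M$ be a finite monoid choice of generators for a monoid $M$. Then $M$ is finite if and only if the loop problem $L_\sigma(M)$ is a regular language. Likewise, if $\sigma : X^+ \to S$ is a finite semigroup choice of generators for a semigroup $S$, then $S$ is finite if and only if $L_\sigma(S)$ is regular.
   Context: Maps are written on the right ($u\sigma$ is the image of $u$ under $\sigma$). For an alphabet $X$, $X^*$ denotes the free monoid on $X$ and $X^+$ the free semigroup on $X$. A (monoid) choice of generators for a monoid $M$ is a surjective monoid morphism $\sigma : X^* \to M$; it is finite if $X$ is finite. Let $\overline{X} = \{\overline{x} : x \in X\}$ be a set of new symbols and $\hat{X} = X \cup \overline{X}$. The loop automaton of $M$ with respect to $\sigma$ is the directed edge-labelled graph with vertex set $M$ having, for every $a \in M$ and $x \in X$, an edge from $a$ to $a(x\sigma)$ labelled $x$ and an edge from $a(x\sigma)$ to $a$ labelled $\overline{x}$; labels of paths are concatenations of edge labels. The loop problem $L_\sigma(M) \subseteq \hat{X}^*$ is the set of labels of paths from the identity of $M$ to itself. For a semigroup $S$, a (semigroup) choice of generators is a surjective morphism $\sigma : X^+ \to S$; let $S^1$ be $S$ with a new identity adjoined (even if $S$ already has one) and $\sigma^1 : X^* \to S^1$ the unique extension of $\sigma$; the loop problem of $S$ is $L_\sigma(S) := L_{\sigma^1}(S^1)$. *)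

theory Defs
  imports Main
begin

text \<open>Words over an alphabet X are lists with entries in X (lists X).
  The doubled alphabet X-hat is encoded in the sum type: Inl x stands for x,
  Inr x stands for x-bar.\<close>

definition hat :: "'x set \<Rightarrow> ('x + 'x) set" where
  "hat X = Inl ` X \<union> Inr ` X"

definition monoid_choice :: "'x set \<Rightarrow> ('x list \<Rightarrow> 'm::monoid_mult) \<Rightarrow> bool" where
  "monoid_choice X \<sigma> \<longleftrightarrow> \<sigma> [] = 1
     \<and> (\<forall>u\<in>lists X. \<forall>v\<in>lists X. \<sigma> (u @ v) = \<sigma> u * \<sigma> v)
     \<and> \<sigma> ` lists X = UNIV"

text \<open>Semigroup choice of generators: a surjective semigroup morphism from X^+
  (nonempty words) onto the semigroup (the whole type 's); values on [] are irrelevant.\<close>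
definition semigroup_choice :: "'x set \<Rightarrow> ('x list \<Rightarrow> 's::semigroup_mult) \<Rightarrow> bool" where
  "semigroup_choice X \<sigma> \<longleftrightarrow>
       (\<forall>u\<in>lists X. \<forall>v\<in>lists X. u \<noteq> [] \<longrightarrow> v \<noteq> [] \<longrightarrow> \<sigma> (u @ v) = \<sigma> u * \<sigma> v)
     \<and> \<sigma> ` (lists X - {[]}) = UNIV"

definition loop_edge :: "('m \<Rightarrow> 'm \<Rightarrow> 'm) \<Rightarrow> 'x set \<Rightarrow> ('x \<Rightarrow> 'm) \<Rightarrow> 'm \<Rightarrow> 'x + 'x \<Rightarrow> 'm \<Rightarrow> bool" where
  "loop_edge mult X g a l b \<longleftrightarrow>
     (\<exists>x\<in>X. (l = Inl x \<and> b = mult a (g x)) \<or> (l = Inr x \<and> a = mult b (g x)))"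

inductive loop_path :: "('m \<Rightarrow> 'm \<Rightarrow> 'm) \<Rightarrow> 'x set \<Rightarrow> ('x \<Rightarrow> 'm) \<Rightarrow> 'm \<Rightarrow> ('x + 'x) list \<Rightarrow> 'm \<Rightarrow> bool"
  for mult X g where
  nil: "loop_path mult X g a [] a"
| cons: "loop_edge mult X g a l b \<Longrightarrow> loop_path mult X g b w c \<Longrightarrow> loop_path mult X g a (l # w) c"

definition loop_problem :: "('m \<Rightarrow> 'm \<Rightarrow> 'm) \<Rightarrow> 'm \<Rightarrow> 'x set \<Rightarrow> ('x \<Rightarrow> 'm) \<Rightarrow> ('x + 'x) list set" where
  "loop_problem mult e X g = {w. loop_path mult X g e w e}"

definition monoid_loop_problem :: "'x set \<Rightarrow> ('x list \<Rightarrow> 'm::monoid_mult) \<Rightarrow> ('x + 'x) list set" where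
  "monoid_loop_problem X \<sigma> = loop_problem (*) 1 X (\<lambda>x. \<sigma> [x])"

text \<open>S^1: adjoin a new identity None to the semigroup.\<close>
fun mult1 :: "'s::semigroup_mult option \<Rightarrow> 's option \<Rightarrow> 's option" where
  "mult1 None y = y"
| "mult1 (Some a) None = Some a"
| "mult1 (Some a) (Some b) = Some (a * b)"

definition sigma1 :: "('x list \<Rightarrow> 's) \<Rightarrow> 'x list \<Rightarrow> 's option" where
  "sigma1 \<sigma> w = (if w = [] then None else Some (\<sigma> w))"

definition semigroup_loop_problem :: "'x set \<Rightarrow> ('x list \<Rightarrow> 's::semigroup_mult) \<Rightarrow> ('x + 'x) list set" where
  "semigroup_loop_problem X \<sigma> = loop_problem mult1 None X (\<lambda>x. sigma1 \<sigma> [x])"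

definition regular_lang :: "'a set \<Rightarrow> 'a list set \<Rightarrow> bool" where
  "regular_lang A L \<longleftrightarrow> (\<exists>(Q::nat set) \<delta> q0 F. finite Q \<and> q0 \<in> Q \<and> F \<subseteq> Q
      \<and> (\<forall>q\<in>Q. \<forall>a\<in>A. \<delta> q a \<in> Q)
      \<and> L = {w \<in> lists A. foldl \<delta> q0 w \<in> F})"

end

theory Submission
  imports Defs
begin

text \<open>If the monoid is finite, the loop automaton is a finite nondeterministic automaton
  and its subset automaton recognises the loop problem. Conversely, the word
  consisting of the letters of u followed by the barred letters of v in reverse order is a loop
  iff u and v evaluate to the same element; so the state a deterministic automaton reaches
  after reading u determines the value of u, and finitely many states leave room for
  only finitely many elements.\<close>

definition act_word :: "('m \<Rightarrow> 'm \<Rightarrow> 'm) \<Rightarrow> ('x \<Rightarrow> 'm) \<Rightarrow> 'm \<Rightarrow> 'x list \<Rightarrow> 'm" where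
  "act_word mult g a u = foldl (\<lambda>b x. mult b (g x)) a u"

lemma act_word_Nil [simp]: "act_word mult g a [] = a"
  by (simp add: act_word_def)

lemma act_word_Cons [simp]: "act_word mult g a (x # u) = act_word mult g (mult a (g x)) u"
  by (simp add: act_word_def)

lemma act_word_snoc [simp]: "act_word mult g a (u @ [x]) = mult (act_word mult g a u) (g x)"
  by (simp add: act_word_def)

lemma loop_path_Nil_iff [simp]: "loop_path mult X g a [] c \<longleftrightarrow> a = c"
  by (auto elim: loop_path.cases intro: loop_path.nil)

lemma loop_path_Cons_iff [simp]:
  "loop_path mult X g a (l # w) c \<longleftrightarrow> (\<exists>b. loop_edge mult X g a l b \<and> loop_path mult X g b w c)"
  by (auto elim: loop_path.cases intro: loop_path.cons)

lemma loop_path_append_iff: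
  "loop_path mult X g a (u @ v) c \<longleftrightarrow> (\<exists>b. loop_path mult X g a u b \<and> loop_path mult X g b v c)"
  by (induction u arbitrary: a) auto

lemma loop_path_in_lists_hat: "loop_path mult X g a w c \<Longrightarrow> w \<in> lists (hat X)"
  by (induction rule: loop_path.induct) (auto simp: loop_edge_def hat_def)

lemma loop_path_map_Inl_iff:
  "u \<in> lists X \<Longrightarrow> loop_path mult X g a (map Inl u) c \<longleftrightarrow> c = act_word mult g a u"
  by (induction u arbitrary: a) (auto simp: loop_edge_def)

lemma loop_path_rev_map_Inr_iff:
  "v \<in> lists X \<Longrightarrow> loop_path mult X g b (rev (map Inr v)) c \<longleftrightarrow> b = act_word mult g c v"
  by (induction v arbitrary: b rule: rev_induct) (auto simp: loop_edge_def loop_path_append_iff)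

lemma loop_path_forth_back_iff:
  assumes "u \<in> lists X" and "v \<in> lists X"
  shows "loop_path mult X g e (map Inl u @ rev (map Inr v)) e \<longleftrightarrow>
    act_word mult g e u = act_word mult g e v"
  using assms by (auto simp: loop_path_append_iff loop_path_map_Inl_iff loop_path_rev_map_Inr_iff)

lemma regular_lang_if_finite_states:
  fixes \<delta> :: "'q \<Rightarrow> 'a \<Rightarrow> 'q"
  assumes "finite (UNIV :: 'q set)"
  shows "regular_lang A {w \<in> lists A. foldl \<delta> q0 w \<in> F}"
proof -
  define n where "n = card (UNIV :: 'q set)"
  obtain h where h: "bij_betw h {0..<n} (UNIV :: 'q set)"
    using ex_bij_betw_nat_finite[OF assms] unfolding n_def by blast
  define f where "f = inv_into {0..<n} h"
  have h_f: "h (f q) = q" for q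
    using h unfolding f_def by (simp add: bij_betw_inv_into_right)
  have f_range: "f q \<in> {0..<n}" for q
    using bij_betw_inv_into[OF h] unfolding f_def bij_betw_def by auto
  have "inj f"
    by (metis h_f injI)
  define d where "d k a = f (\<delta> (h k) a)" for k a
  have foldl_d: "foldl d (f q) w = f (foldl \<delta> q w)" for q w
    by (induction w arbitrary: q) (auto simp: d_def h_f)
  show ?thesis
    unfolding regular_lang_def
    using f_range \<open>inj f\<close>
    by (intro exI[of _ "{0..<n}"] exI[of _ d] exI[of _ "f q0"] exI[of _ "f ` F"])
      (auto simp: d_def foldl_d inj_image_mem_iff)
qed

lemma regular_lang_loop_problem_if_finite:
  assumes "finite (UNIV :: 'm set)"
  shows "regular_lang (hat X) (loop_problem mult (e :: 'm) X g)"
proof -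
  define d where "d S l = {b. \<exists>a\<in>S. loop_edge mult X g a l b}" for S l
  have foldl_d: "foldl d S w = {c. \<exists>a\<in>S. loop_path mult X g a w c}" for S w
    by (induction w arbitrary: S) (auto simp: d_def)
  have "loop_problem mult e X g = {w \<in> lists (hat X). foldl d {e} w \<in> {S. e \<in> S}}"
    unfolding loop_problem_def foldl_d by (auto dest: loop_path_in_lists_hat)
  moreover have "finite (UNIV :: 'm set set)"
    using assms by (simp add: Finite_Set.finite_set)
  ultimately show ?thesis
    using regular_lang_if_finite_states by metis
qed

lemma regular_lang_right_congruence:
  assumes "regular_lang A L"
  obtains \<phi> :: "'a list \<Rightarrow> nat" where "finite (\<phi> ` lists A)"
    and "\<And>u v w. u \<in> lists A \<Longrightarrow> v \<in> lists A \<Longrightarrow> w \<in> lists A \<Longrightarrow> \<phi> u = \<phi> v \<Longrightarrow>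
      u @ w \<in> L \<longleftrightarrow> v @ w \<in> L"
proof -
  obtain Q :: "nat set" and \<delta> q0 F where "finite Q" "q0 \<in> Q"
    and closed: "\<forall>q\<in>Q. \<forall>a\<in>A. \<delta> q a \<in> Q"
    and L: "L = {w \<in> lists A. foldl \<delta> q0 w \<in> F}"
    using assms unfolding regular_lang_def by blast
  have foldl_in_Q: "q \<in> Q \<Longrightarrow> w \<in> lists A \<Longrightarrow> foldl \<delta> q w \<in> Q" for q w
    by (induction w arbitrary: q) (auto simp: closed)
  have "foldl \<delta> q0 ` lists A \<subseteq> Q"
    using foldl_in_Q \<open>q0 \<in> Q\<close> by blast
  then have "finite (foldl \<delta> q0 ` lists A)"
    using \<open>finite Q\<close> finite_subset by blast
  moreover have "u @ w \<in> L \<longleftrightarrow> v @ w \<in> L"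
    if "u \<in> lists A" "v \<in> lists A" "w \<in> lists A" "foldl \<delta> q0 u = foldl \<delta> q0 v" for u v w
    using that by (simp add: L)
  ultimately show ?thesis
    by (rule that)
qed

lemma finite_image_if_factors:
  assumes "finite (\<phi> ` A)" and "\<And>u v. u \<in> A \<Longrightarrow> v \<in> A \<Longrightarrow> \<phi> u = \<phi> v \<Longrightarrow> f u = f v"
  shows "finite (f ` A)"
proof -
  define h where "h q = f (SOME u. u \<in> A \<and> \<phi> u = q)" for q
  have "f u = h (\<phi> u)" if "u \<in> A" for u
    unfolding h_def using that assms(2) by (metis (mono_tags, lifting) someI_ex)
  then have "f ` A = h ` \<phi> ` A"
    by (auto simp: image_image)
  then show ?thesis
    using assms(1) by simp
qed

lemma finite_if_regular_lang_loop_problem: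
  fixes X :: "'x set"
  assumes reg: "regular_lang (hat X) (loop_problem mult (e :: 'm) X g)"
    and surj: "act_word mult g e ` lists X = UNIV"
  shows "finite (UNIV :: 'm set)"
proof -
  let ?L = "loop_problem mult e X g"
  obtain \<phi> :: "('x + 'x) list \<Rightarrow> nat" where fin: "finite (\<phi> ` lists (hat X))"
    and cong: "\<And>u v w. u \<in> lists (hat X) \<Longrightarrow> v \<in> lists (hat X) \<Longrightarrow> w \<in> lists (hat X) \<Longrightarrow>
      \<phi> u = \<phi> v \<Longrightarrow> u @ w \<in> ?L \<longleftrightarrow> v @ w \<in> ?L"
    using regular_lang_right_congruence[OF reg] by metis
  have in_L_iff: "map Inl u @ rev (map Inr v) \<in> ?L \<longleftrightarrow> act_word mult g e u = act_word mult g e v"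
    if "u \<in> lists X" "v \<in> lists X" for u v
    unfolding loop_problem_def using loop_path_forth_back_iff[OF that] by simp
  have Inl_hat: "u \<in> lists X \<Longrightarrow> map Inl u \<in> lists (hat X)"
    and Inr_hat: "u \<in> lists X \<Longrightarrow> rev (map Inr u) \<in> lists (hat X)" for u
    by (auto simp: hat_def)
  have factors: "act_word mult g e u = act_word mult g e v"
    if u: "u \<in> lists X" and v: "v \<in> lists X" and "\<phi> (map Inl u) = \<phi> (map Inl v)" for u v
  proof -
    have "map Inl u @ rev (map Inr u) \<in> ?L"
      using in_L_iff[OF u u] by simp
    then have "map Inl v @ rev (map Inr u) \<in> ?L"
      using cong[OF Inl_hat[OF u] Inl_hat[OF v] Inr_hat[OF u]] \<open>\<phi> (map Inl u) = \<phi> (map Inl v)\<close>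
      by blast
    then show ?thesis
      using in_L_iff[OF v u] by simp
  qed
  have "(\<phi> \<circ> map Inl) ` lists X \<subseteq> \<phi> ` lists (hat X)"
    using Inl_hat by auto
  then have "finite ((\<phi> \<circ> map Inl) ` lists X)"
    using fin finite_subset by blast
  then have "finite (act_word mult g e ` lists X)"
    by (rule finite_image_if_factors) (rule factors; simp)
  then show ?thesis
    by (simp add: surj)
qed

lemma regular_lang_loop_problem_iff_finite:
  assumes "act_word mult g e ` lists X = UNIV"
  shows "regular_lang (hat X) (loop_problem mult (e :: 'm) X g) \<longleftrightarrow> finite (UNIV :: 'm set)"
proof
  show "finite (UNIV :: 'm set)" if "regular_lang (hat X) (loop_problem mult e X g)"
    using that assms by (rule finite_if_regular_lang_loop_problem)
  show "regular_lang (hat X) (loop_problem mult e X g)" if "finite (UNIV :: 'm set)"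
    using that by (rule regular_lang_loop_problem_if_finite)
qed

lemma act_word_monoid_choice:
  assumes "monoid_choice X \<sigma>" and "u \<in> lists X"
  shows "act_word (*) (\<lambda>x. \<sigma> [x]) 1 u = \<sigma> u"
  using assms(2)
proof (induction u rule: rev_induct)
  case Nil
  then show ?case
    using assms(1) by (simp add: monoid_choice_def)
next
  case (snoc x u)
  then have "\<sigma> (u @ [x]) = \<sigma> u * \<sigma> [x]"
    using assms(1) by (simp add: monoid_choice_def)
  with snoc show ?case
    by simp
qed

lemma act_word_monoid_choice_surj:
  assumes "monoid_choice X \<sigma>"
  shows "act_word (*) (\<lambda>x. \<sigma> [x]) 1 ` lists X = UNIV"
proof -
  have "act_word (*) (\<lambda>x. \<sigma> [x]) 1 ` lists X = \<sigma> ` lists X"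
    using act_word_monoid_choice[OF assms] by (rule image_cong[OF refl])
  also have "\<dots> = UNIV"
    using assms by (simp add: monoid_choice_def)
  finally show ?thesis .
qed

lemma act_word_semigroup_choice:
  assumes "semigroup_choice X \<tau>" and "u \<in> lists X"
  shows "act_word mult1 (\<lambda>x. sigma1 \<tau> [x]) None u = sigma1 \<tau> u"
  using assms(2)
proof (induction u rule: rev_induct)
  case Nil
  then show ?case
    by (simp add: sigma1_def)
next
  case (snoc x u)
  then have "u \<noteq> [] \<Longrightarrow> \<tau> (u @ [x]) = \<tau> u * \<tau> [x]"
    using assms(1) by (simp add: semigroup_choice_def)
  with snoc show ?case
    by (cases "u = []") (simp_all add: sigma1_def)
qed

lemma sigma1_semigroup_choice_surj:
  fixes \<tau> :: "'x list \<Rightarrow> 's::semigroup_mult"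
  assumes "semigroup_choice X \<tau>"
  shows "sigma1 \<tau> ` lists X = UNIV"
proof -
  have "z \<in> sigma1 \<tau> ` lists X" for z :: "'s option"
  proof (cases z)
    case None
    then show ?thesis
      by (simp add: sigma1_def image_iff)
  next
    case (Some s)
    obtain u where "u \<in> lists X - {[]}" and "\<tau> u = s"
      using assms unfolding semigroup_choice_def by (metis UNIV_I imageE)
    then show ?thesis
      using Some by (auto simp: sigma1_def image_iff)
  qed
  then show ?thesis
    by blast
qed

lemma act_word_semigroup_choice_surj:
  assumes "semigroup_choice X \<tau>"
  shows "act_word mult1 (\<lambda>x. sigma1 \<tau> [x]) None ` lists X = UNIV"
proof -
  have "act_word mult1 (\<lambda>x. sigma1 \<tau> [x]) None ` lists X = sigma1 \<tau> ` lists X"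
    using act_word_semigroup_choice[OF assms] by (rule image_cong[OF refl])
  also have "\<dots> = UNIV"
    using assms by (rule sigma1_semigroup_choice_surj)
  finally show ?thesis .
qed

theorem theorem6p1:
  shows "(\<forall>(X::'x set) (\<sigma>::'x list \<Rightarrow> 'm::monoid_mult). finite X \<and> monoid_choice X \<sigma> \<longrightarrow>
            (finite (UNIV::'m set) \<longleftrightarrow> regular_lang (hat X) (monoid_loop_problem X \<sigma>)))
       \<and> (\<forall>(Y::'y set) (\<tau>::'y list \<Rightarrow> 's::semigroup_mult). finite Y \<and> semigroup_choice Y \<tau> \<longrightarrow>
            (finite (UNIV::'s set) \<longleftrightarrow> regular_lang (hat Y) (semigroup_loop_problem Y \<tau>)))"
proof (intro conjI allI impI)
  fix X :: "'x set" and \<sigma> :: "'x list \<Rightarrow> 'm"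
  assume "finite X \<and> monoid_choice X \<sigma>"
  then show "finite (UNIV::'m set) \<longleftrightarrow> regular_lang (hat X) (monoid_loop_problem X \<sigma>)"
    unfolding monoid_loop_problem_def
    by (simp add: regular_lang_loop_problem_iff_finite act_word_monoid_choice_surj)
next
  fix Y :: "'y set" and \<tau> :: "'y list \<Rightarrow> 's"
  assume "finite Y \<and> semigroup_choice Y \<tau>"
  then show "finite (UNIV::'s set) \<longleftrightarrow> regular_lang (hat Y) (semigroup_loop_problem Y \<tau>)"
    unfolding semigroup_loop_problem_def
    by (simp add: regular_lang_loop_problem_iff_finite act_word_semigroup_choice_surj)
qed

end
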